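(* Let $L>0$, $\rho\in C([0,L];[0,\infty))$ with $\rho(0)=0$, $\rho>0$ on $(0,L]$ and $V(0,0):=\int_0^L\rho(\zeta)/\zeta\,d\zeta<\infty$; let $V(r,z)=\int_0^L\rho(\zeta)((\zeta-z)^2+r^2)^{-1/2}d\zeta$. Let $c>V(0,0)$ and let $r_c:[0,z_2]\to[0,\infty)$ be the contour function of the level set $\{V=c\}$, i.e. the function with $r_c(0)=r_c(z_2)=0$, $r_c>0$ on $(0,z_2)$ and $\{(r,z): r\ge0,\ (r>0\text{ or }z\notin[0,L]),\ V(r,z)=c\}\cup\{(0,0)\}=\{(r_c(z),z):z\in[0,z_2]\}$. Let $0<\alpha<\frac{c-V(0,0)}{2}<\beta$. (a) If $\rho$ is monotonically increasing on some $[0,b]$, $b>0$, and $\delta\in(0,1)$, then there exists $z_0\in(0,L]$ such that $\exp(-\beta/\rho((1-\delta)z))<r_c(z)<\exp(-\alpha/\rho((1+\delta)z))$ for all $z\in(0,z_0]$. (b) If $\rho$ is Dini continuous on some $[0,b]$, $b\in(0,L]$, then there exists $z_0\in(0,L]$ such that $e^{-\beta/\rho(z)}<r_c(z)<e^{-\alpha/\rho(z)}$ for all $z\in(0,z_0]$.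
   Context: For continuous $f:[a,b]\to\mathbb{R}$, $\omega_f(t)=\sup\{|f(x)-f(y)|:x,y\in[a,b],|x-y|\le t\}$, and $f$ is Dini continuous if $\int_0^1\omega_f(t)/t\,dt<\infty$. The existence of the contour function $r_c$ (continuous on $[0,z_2]$, with $z_2>L$) is known. *)

theory Defs
  imports "HOL-Analysis.Analysis"
begin

definition potential :: "(real \<Rightarrow> real) \<Rightarrow> real \<Rightarrow> real \<Rightarrow> real \<Rightarrow> real" where
  "potential \<rho> L r z = integral {0..L} (\<lambda>\<zeta>. \<rho> \<zeta> / sqrt ((\<zeta> - z)^2 + r^2))"

definition modulus_of_continuity :: "real \<Rightarrow> real \<Rightarrow> (real \<Rightarrow> real) \<Rightarrow> real \<Rightarrow> real" where
  "modulus_of_continuity a b f t =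
     Sup {\<bar>f x - f y\<bar> | x y. x \<in> {a..b} \<and> y \<in> {a..b} \<and> \<bar>x - y\<bar> \<le> t}"

text \<open>Dini continuity: f continuous on [a,b] and int_0^1 omega_f(t)/t dt finite
  (the integrand is nonnegative and measurable, so integrability is finiteness).\<close>
definition dini_continuous_on :: "real \<Rightarrow> real \<Rightarrow> (real \<Rightarrow> real) \<Rightarrow> bool" where
  "dini_continuous_on a b f \<longleftrightarrow> continuous_on {a..b} f \<and>
     (\<lambda>t. modulus_of_continuity a b f t / t) integrable_on {0..1}"

end

(* As (z, r) -> (0, 0), V(r, z) = 2 P(z) ln(1/r) + V(0,0) + o(1), with P(z) = rho((1 + delta) z) in
   the upper and P(z) = rho((1 - delta) z) in the lower estimate if rho is monotone, and P(z) = rho(z)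
   if rho is Dini continuous.  Split the integral at an interval of length comparable to z around z
   and at a small fixed eta.  On that interval rho is compared with P(z) (by monotonicity, resp. up
   to 2 int_0^z omega(t)/t dt), and the kernel ((zeta - z)^2 + r^2)^(-1/2) integrates to two arsinh
   terms, each between ln(delta z) - ln r and -ln r; the error P(z) ln z tends to 0 because rho(t)/t,
   resp. omega(t)/t, is integrable at 0.  Beyond that interval the kernel is comparable to 1/zeta, so
   the rest is V(0,0) up to int_0^eta rho/zeta and O((z + r)/eta).  On the contour V(r_c(z), z) = c
   and r_c(z) -> 0, hence 2 P(z) ln(1/r_c(z)) -> c - V(0,0). *)

theory Submission
  imports Defs
begin

section \<open>The kernel of the potential\<close>

lemma has_real_derivative_arsinh_shift:
  fixes r z x :: real
  assumes "0 < r"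
  shows "((\<lambda>\<zeta>. arsinh ((\<zeta> - z) / r)) has_real_derivative 1 / sqrt ((x - z)^2 + r^2)) (at x)"
proof -
  have "((x - z) / r)^2 + 1 = ((x - z)^2 + r^2) / r^2"
    using assms by (simp add: power_divide field_simps)
  then have "sqrt (((x - z) / r)^2 + 1) = sqrt ((x - z)^2 + r^2) / r"
    using assms by (simp only: real_sqrt_divide real_sqrt_abs abs_of_pos)
  then have "1 / sqrt (((x - z) / r)^2 + 1) * (1 / r) = 1 / sqrt ((x - z)^2 + r^2)"
    using assms by simp
  moreover have "((\<lambda>\<zeta>. (\<zeta> - z) / r) has_real_derivative 1 / r) (at x)"
    using assms by (auto intro!: derivative_eq_intros)
  ultimately show ?thesis
    using DERIV_chain2[OF arsinh_real_has_field_derivative] by metis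
qed

lemma has_integral_inverse_distance:
  fixes r z a b :: real
  assumes "0 < r" "a \<le> b"
  shows "((\<lambda>\<zeta>. 1 / sqrt ((\<zeta> - z)^2 + r^2))
           has_integral arsinh ((b - z) / r) - arsinh ((a - z) / r)) {a..b}"
proof (rule fundamental_theorem_of_calculus[OF assms(2)])
  fix x assume "x \<in> {a..b}"
  show "((\<lambda>\<zeta>. arsinh ((\<zeta> - z) / r)) has_vector_derivative 1 / sqrt ((x - z)^2 + r^2))
          (at x within {a..b})"
    using has_real_derivative_arsinh_shift[OF assms(1)]
    by (simp add: has_real_derivative_iff_has_vector_derivative[symmetric] has_field_derivative_at_within)
qed

lemma arsinh_div_le_minus_ln:
  fixes x r :: real
  assumes "0 \<le> x" "0 < r" "2 * x + r \<le> 1"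
  shows "arsinh (x / r) \<le> - ln r"
proof -
  have "sqrt ((x / r)^2 + 1) \<le> x / r + 1"
    using sqrt_sum_squares_le_sum[of "x / r" 1] assms by simp
  moreover have "(2 * x + r) / r = 2 * (x / r) + 1"
    using assms by (simp add: field_simps)
  moreover have "(2 * x + r) / r \<le> 1 / r"
    using assms by (simp add: divide_right_mono)
  ultimately have "x / r + sqrt ((x / r)^2 + 1) \<le> 1 / r"
    by linarith
  then have "arsinh (x / r) \<le> ln (1 / r)"
    unfolding arsinh_real_def by (rule ln_mono[OF _ arsinh_real_aux])
  then show ?thesis
    using assms by (simp add: ln_div)
qed

lemma ln_diff_le_arsinh_div:
  fixes x r :: real
  assumes "0 < x" "0 < r"
  shows "ln x - ln r \<le> arsinh (x / r)"
proof -
  have "ln (x / r) \<le> arsinh (x / r)"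
    unfolding arsinh_real_def using assms by (intro ln_mono) auto
  then show ?thesis
    using assms by (simp add: ln_div)
qed

lemma div_sqrt_le_mult_div:
  fixes p \<zeta> z r c :: real
  assumes "0 \<le> p" "0 < \<zeta>" "0 < c" "\<zeta> \<le> c * (\<zeta> - z)"
  shows "p / sqrt ((\<zeta> - z)^2 + r^2) \<le> c * (p / \<zeta>)"
proof -
  have "\<zeta> / c \<le> \<zeta> - z"
    using assms by (simp add: divide_le_eq mult.commute)
  then have "\<zeta> / c \<le> sqrt ((\<zeta> - z)^2 + r^2)"
    using real_sqrt_sum_squares_ge1 order_trans by blast
  moreover have "0 < \<zeta> / c"
    using assms by simp
  ultimately have "p / sqrt ((\<zeta> - z)^2 + r^2) \<le> p / (\<zeta> / c)"
    using assms(1) by (intro divide_left_mono mult_pos_pos) linarith+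
  then show ?thesis
    by (simp add: ac_simps)
qed

lemma mult_div_le_div_sqrt:
  fixes p \<zeta> z r \<eta> :: real
  assumes "0 \<le> p" "0 < r" "0 < \<eta>" "\<eta> \<le> \<zeta>" "0 \<le> z" "z \<le> \<zeta>"
  shows "(1 - r / \<eta>) * (p / \<zeta>) \<le> p / sqrt ((\<zeta> - z)^2 + r^2)"
proof -
  have "(1 - r / \<eta>) * (\<zeta> + r) \<le> \<zeta>"
  proof -
    have "(1 - r / \<eta>) * (\<zeta> + r) = \<zeta> - r * ((\<zeta> - \<eta>) + r) / \<eta>"
      using assms by (simp add: field_simps)
    moreover have "0 \<le> r * ((\<zeta> - \<eta>) + r) / \<eta>"
      using assms by simp
    ultimately show ?thesis
      by simp
  qed
  then have "((1 - r / \<eta>) * (\<zeta> + r)) * (p / (\<zeta> * (\<zeta> + r))) \<le> \<zeta> * (p / (\<zeta> * (\<zeta> + r)))"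
    using assms by (intro mult_right_mono) auto
  moreover have "(1 - r / \<eta>) * (p / \<zeta>) = ((1 - r / \<eta>) * (\<zeta> + r)) * (p / (\<zeta> * (\<zeta> + r)))"
    using assms by (simp add: add_pos_pos)
  moreover have "\<zeta> * (p / (\<zeta> * (\<zeta> + r))) = p / (\<zeta> + r)"
    using assms by simp
  ultimately have "(1 - r / \<eta>) * (p / \<zeta>) \<le> p / (\<zeta> + r)"
    by simp
  also have "\<dots> \<le> p / sqrt ((\<zeta> - z)^2 + r^2)"
  proof (rule divide_left_mono[OF _ assms(1)])
    show "sqrt ((\<zeta> - z)^2 + r^2) \<le> \<zeta> + r"
      using sqrt_sum_squares_le_sum[of "\<zeta> - z" r] assms by simp
    show "0 < (\<zeta> + r) * sqrt ((\<zeta> - z)^2 + r^2)"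
      using assms by (simp add: add_nonneg_pos)
  qed
  finally show ?thesis .
qed

lemma abs_divide_diff_le:
  fixes p q s d w :: real
  assumes "0 < d" "d \<le> s" "\<bar>p - q\<bar> \<le> w"
  shows "\<bar>p / s - q / s\<bar> \<le> w / d"
proof -
  have "\<bar>p / s - q / s\<bar> = \<bar>p - q\<bar> / s"
    using assms by (simp add: diff_divide_distrib[symmetric])
  also have "\<dots> \<le> w / s"
    using assms by (simp add: divide_right_mono)
  also have "\<dots> \<le> w / d"
    using assms by (intro divide_left_mono) auto
  finally show ?thesis .
qed

lemma has_integral_comp_abs_diff:
  fixes g :: "real \<Rightarrow> real"
  assumes "0 \<le> a" "(g has_integral J) {0..a}"
  shows "((\<lambda>\<zeta>. g \<bar>\<zeta> - z\<bar>) has_integral 2 * J) {z - a..z + a}"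
proof -
  have "((\<lambda>\<zeta>. g (\<zeta> - z)) has_integral J) {z..z + a}"
    using assms(2) has_integral_shift_Icc_real[of "\<lambda>\<zeta>. g (\<zeta> - z)" z J 0 a]
    by (simp add: comp_def add.commute)
  then have right: "((\<lambda>\<zeta>. g \<bar>\<zeta> - z\<bar>) has_integral J) {z..z + a}"
    by (rule has_integral_spike_finite[of "{}", rotated 2]) auto
  have "((\<lambda>x. g (- x)) has_integral J) {- a..- 0}"
    using assms(2) by (simp only: has_integral_reflect_real)
  then have "((\<lambda>\<zeta>. g (z - \<zeta>)) has_integral J) {z - a..z}"
    using has_integral_shift_Icc_real[of "\<lambda>\<zeta>. g (z - \<zeta>)" z J "- a" 0]
    by (simp add: comp_def add.commute)
  then have left: "((\<lambda>\<zeta>. g \<bar>\<zeta> - z\<bar>) has_integral J) {z - a..z}"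
    by (rule has_integral_spike_finite[of "{}", rotated 2]) (auto simp: abs_of_nonpos)
  show ?thesis
    using has_integral_combine[OF _ _ left right] assms(1) by simp
qed

lemma filterlim_mult_const_at_right_0:
  fixes c :: real
  assumes "0 < c"
  shows "filterlim (\<lambda>z. c * z) (at_right 0) (at_right 0)"
  unfolding filterlim_at
proof
  show "\<forall>\<^sub>F z in at_right 0. c * z \<in> {0<..} \<and> c * z \<noteq> 0"
    using eventually_at_right_less[of 0] by eventually_elim (use assms in auto)
  show "((\<lambda>z. c * z) \<longlongrightarrow> 0) (at_right 0)"
    by (intro tendsto_mult_right_zero tendsto_ident_at)
qed

lemma filterlim_sqrt_at_right_0: "filterlim sqrt (at_right 0) (at_right (0::real))"
  unfolding filterlim_at
proof
  show "\<forall>\<^sub>F t in at_right 0. sqrt t \<in> {0<..} \<and> sqrt t \<noteq> 0"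
    using eventually_at_right_less[of 0] by eventually_elim auto
  show "(sqrt \<longlongrightarrow> 0) (at_right 0)"
    using tendsto_real_sqrt[OF tendsto_ident_at, of 0 "{0<..}"] by simp
qed

lemma filterlim_at_right_0_of_continuous:
  fixes f :: "real \<Rightarrow> real"
  assumes "continuous_on {0..a} f" "f 0 = 0" "0 < a" "\<forall>z\<in>{0<..<a}. 0 < f z"
  shows "filterlim f (at_right 0) (at_right 0)"
  unfolding filterlim_at
proof
  show "\<forall>\<^sub>F z in at_right 0. f z \<in> {0<..} \<and> f z \<noteq> 0"
    using eventually_at_right_real[OF assms(3)] by eventually_elim (use assms(4) in force)
  show "(f \<longlongrightarrow> 0) (at_right 0)"
    using continuous_on_Icc_at_rightD[OF assms(1,3)] assms(2) by simp
qed

lemma eventually_pos_comp_mult: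
  fixes f :: "real \<Rightarrow> real"
  assumes "\<forall>x\<in>{0<..L}. 0 < f x" "0 < L" "0 < \<kappa>"
  shows "\<forall>\<^sub>F z in at_right 0. 0 < f (\<kappa> * z)"
proof -
  have "\<forall>\<^sub>F z in at_right 0. z \<in> {0<..<L / \<kappa>}"
    using assms by (intro eventually_at_right_real) simp
  then show ?thesis
  proof eventually_elim
    case (elim z)
    then have "\<kappa> * z \<in> {0<..L}"
      using assms by (simp add: field_simps)
    then show ?case
      using assms(1) by blast
  qed
qed

lemma eventually_at_right_0_pair_less:
  fixes c d :: real
  assumes "0 < c" "0 < d"
  shows "\<forall>\<^sub>F (z, r) in at_right 0 \<times>\<^sub>F at_right 0. z \<in> {0<..<c} \<and> r \<in> {0<..<d}"
proof -
  from eventually_prodI[OF eventually_at_right_real[OF assms(1)] eventually_at_right_real[OF assms(2)]]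
  show ?thesis
    by eventually_elim auto
qed

lemma eventually_at_right_0_imp_Ioc:
  fixes P :: "real \<Rightarrow> bool"
  assumes "\<forall>\<^sub>F z in at_right 0. P z" "0 < L"
  shows "\<exists>z0\<in>{0<..L}. \<forall>z\<in>{0<..z0}. P z"
proof -
  obtain b where "0 < b" and b: "\<And>z. 0 < z \<Longrightarrow> z < b \<Longrightarrow> P z"
    using assms(1) unfolding eventually_at_right[OF zero_less_one] by blast
  then show ?thesis
    using assms(2) by (intro bexI[of _ "min (b / 2) L"]) auto
qed

lemma tendsto_integral_at_right_0:
  fixes f :: "real \<Rightarrow> real"
  assumes "f integrable_on {0..a}" "0 < a"
  shows "((\<lambda>t. integral {0..t} f) \<longlongrightarrow> 0) (at_right 0)"
  using continuous_on_Icc_at_rightD[OF indefinite_integral_continuous_1[OF assms(1)] assms(2)]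
  by simp

lemma has_integral_inverse:
  fixes a b :: real
  assumes "0 < a" "a \<le> b"
  shows "((\<lambda>s. 1 / s) has_integral ln b - ln a) {a..b}"
proof (rule fundamental_theorem_of_calculus[OF assms(2)])
  fix x assume "x \<in> {a..b}"
  then have "(ln has_real_derivative 1 / x) (at x within {a..b})"
    using assms by (intro has_field_derivative_at_within[OF DERIV_ln_divide]) auto
  then show "(ln has_vector_derivative 1 / x) (at x within {a..b})"
    by (simp add: has_real_derivative_iff_has_vector_derivative)
qed

text \<open>If \<open>g\<close> is monotone and \<open>g(t)/t\<close> is integrable at \<open>0\<close>, then
  \<open>g(t) ln(1/t) = 2 g(t) (ln \<surd>t - ln t) \<le> 2 \<integral>\<^sub>t\<^sup>\<surd>\<^sup>t g(s)/s ds\<close>, which tends to \<open>0\<close>.\<close>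
lemma tendsto_mono_mult_ln_at_right_0:
  fixes g :: "real \<Rightarrow> real"
  assumes "0 < b" and mono: "mono_on {0..b} g" and nonneg: "\<And>t. t \<in> {0..b} \<Longrightarrow> 0 \<le> g t"
    and integrable: "(\<lambda>t. g t / t) integrable_on {0..b}"
  shows "((\<lambda>t. g t * ln t) \<longlongrightarrow> 0) (at_right 0)"
proof (rule tendsto_sandwich)
  define J where "J u = integral {0..u} (\<lambda>t. g t / t)" for u
  have key: "- (g t * ln t) \<le> 2 * J (sqrt t)" if t: "0 < t" "t \<le> 1" "sqrt t \<le> b" for t
  proof -
    have "t \<le> sqrt t"
      using t by (simp add: real_le_rsqrt power2_eq_square mult_le_cancel_left1)
    have "((\<lambda>s. g t * (1 / s)) has_integral g t * (ln (sqrt t) - ln t)) {t..sqrt t}"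
      by (intro has_integral_mult_right has_integral_inverse \<open>t \<le> sqrt t\<close> t)
    moreover have "((\<lambda>s. g s / s) has_integral integral {t..sqrt t} (\<lambda>s. g s / s)) {t..sqrt t}"
      using t by (intro integrable_integral integrable_on_subinterval[OF integrable]) auto
    moreover have "g t * (1 / s) \<le> g s / s" if "s \<in> {t..sqrt t}" for s
      using that t \<open>t \<le> sqrt t\<close> mono_onD[OF mono, of t s] by (simp add: divide_right_mono)
    ultimately have "g t * (ln (sqrt t) - ln t) \<le> integral {t..sqrt t} (\<lambda>s. g s / s)"
      by (rule has_integral_le)
    also have "\<dots> \<le> J (sqrt t)"
      unfolding J_def using t \<open>t \<le> sqrt t\<close> nonneg
      by (intro integral_subset_le integrable_on_subinterval[OF integrable]) auto
    finally show ?thesis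
      using t by (simp add: ln_sqrt algebra_simps)
  qed
  have small: "\<forall>\<^sub>F t in at_right 0. 0 < t \<and> t \<le> 1 \<and> t \<le> b \<and> sqrt t \<le> b"
  proof -
    have "\<forall>\<^sub>F t in at_right 0. sqrt t < b"
      using filterlim_sqrt_at_right_0 \<open>0 < b\<close>
      by (intro order_tendstoD(2)) (auto simp: filterlim_at)
    then show ?thesis
      using eventually_at_right_real[OF zero_less_one] eventually_at_right_real[OF \<open>0 < b\<close>]
      by eventually_elim auto
  qed
  from small show "\<forall>\<^sub>F t in at_right 0. - 2 * J (sqrt t) \<le> g t * ln t"
    by eventually_elim (use key in fastforce)
  from small show "\<forall>\<^sub>F t in at_right 0. g t * ln t \<le> 0"
    by eventually_elim (use nonneg in \<open>auto intro!: mult_nonneg_nonpos\<close>)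
  have "(J \<longlongrightarrow> 0) (at_right 0)"
    unfolding J_def by (rule tendsto_integral_at_right_0[OF integrable \<open>0 < b\<close>])
  then have "((\<lambda>t. J (sqrt t)) \<longlongrightarrow> 0) (at_right 0)"
    by (rule filterlim_compose[OF _ filterlim_sqrt_at_right_0])
  then show "((\<lambda>t. - 2 * J (sqrt t)) \<longlongrightarrow> 0) (at_right 0)"
    by (rule tendsto_mult_right_zero)
qed (rule tendsto_const)

section \<open>The modulus of continuity\<close>

lemma bdd_above_abs_diff_image:
  fixes f :: "real \<Rightarrow> real"
  assumes "continuous_on {a..b} f"
  shows "bdd_above {\<bar>f x - f y\<bar> | x y. x \<in> {a..b} \<and> y \<in> {a..b} \<and> \<bar>x - y\<bar> \<le> t}"
proof -
  obtain M where "\<forall>x\<in>{a..b}. \<bar>f x\<bar> \<le> M"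
    using compact_imp_bounded[OF compact_continuous_image[OF assms compact_Icc]]
    by (auto simp: bounded_iff)
  then have "\<bar>f x - f y\<bar> \<le> 2 * M" if "x \<in> {a..b}" "y \<in> {a..b}" for x y
    using that by (smt (verit, best))
  then show ?thesis
    by (intro bdd_aboveI[of _ "2 * M"]) blast
qed

lemma abs_diff_le_modulus_of_continuity:
  fixes f :: "real \<Rightarrow> real"
  assumes "continuous_on {a..b} f" "x \<in> {a..b}" "y \<in> {a..b}" "\<bar>x - y\<bar> \<le> t"
  shows "\<bar>f x - f y\<bar> \<le> modulus_of_continuity a b f t"
  unfolding modulus_of_continuity_def
  by (rule cSup_upper[OF _ bdd_above_abs_diff_image[OF assms(1)]]) (use assms in blast)

lemma modulus_of_continuity_nonneg:
  fixes f :: "real \<Rightarrow> real"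
  assumes "a \<le> b" "continuous_on {a..b} f" "0 \<le> t"
  shows "0 \<le> modulus_of_continuity a b f t"
  using abs_diff_le_modulus_of_continuity[OF assms(2), of a a t] assms by simp

lemma mono_on_modulus_of_continuity:
  fixes f :: "real \<Rightarrow> real"
  assumes "a \<le> b" "continuous_on {a..b} f"
  shows "mono_on {0..} (modulus_of_continuity a b f)"
proof (rule mono_onI)
  fix s t :: real assume "s \<in> {0..}" "s \<le> t"
  then show "modulus_of_continuity a b f s \<le> modulus_of_continuity a b f t"
    unfolding modulus_of_continuity_def using assms(1)
    by (intro cSup_subset_mono bdd_above_abs_diff_image[OF assms(2)]) force+
qed

lemma tendsto_modulus_of_continuity_mult_ln:
  fixes f :: "real \<Rightarrow> real"
  assumes "a \<le> b" "dini_continuous_on a b f"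
  shows "((\<lambda>t. modulus_of_continuity a b f t * ln t) \<longlongrightarrow> 0) (at_right 0)"
proof (rule tendsto_mono_mult_ln_at_right_0[OF zero_less_one])
  have cont: "continuous_on {a..b} f"
    and integrable: "(\<lambda>t. modulus_of_continuity a b f t / t) integrable_on {0..1}"
    using assms(2) unfolding dini_continuous_on_def by auto
  show "(\<lambda>t. modulus_of_continuity a b f t / t) integrable_on {0..1}"
    by (rule integrable)
  show "mono_on {0..1} (modulus_of_continuity a b f)"
    by (rule mono_on_subset[OF mono_on_modulus_of_continuity[OF assms(1) cont]]) auto
  show "0 \<le> modulus_of_continuity a b f t" if "t \<in> {0..1}" for t
    using modulus_of_continuity_nonneg[OF assms(1) cont] that by simp
qed

lemma tendsto_mult_ln_dini:
  fixes f :: "real \<Rightarrow> real"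
  assumes "0 < b" "dini_continuous_on 0 b f" "f 0 = 0"
  shows "((\<lambda>t. f t * ln t) \<longlongrightarrow> 0) (at_right 0)"
proof (rule Lim_null_comparison)
  have cont: "continuous_on {0..b} f"
    using assms(2) unfolding dini_continuous_on_def by simp
  have "\<forall>\<^sub>F t in at_right 0. t \<in> {0<..<min b 1}"
    using assms(1) by (intro eventually_at_right_real) simp
  then show "\<forall>\<^sub>F t in at_right 0. norm (f t * ln t) \<le> - (modulus_of_continuity 0 b f t * ln t)"
  proof eventually_elim
    case (elim t)
    then have "\<bar>f t - f 0\<bar> \<le> modulus_of_continuity 0 b f t" "ln t \<le> 0"
      by (auto intro!: abs_diff_le_modulus_of_continuity[OF cont])
    then show ?case
      using assms(3) by (simp add: abs_mult mult_right_mono_neg)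
  qed
  show "((\<lambda>t. - (modulus_of_continuity 0 b f t * ln t)) \<longlongrightarrow> 0) (at_right 0)"
    using tendsto_minus[OF tendsto_modulus_of_continuity_mult_ln[OF _ assms(2)]] assms(1) by simp
qed

section \<open>The potential of a line density near the segment\<close>

locale line_density =
  fixes \<rho> :: "real \<Rightarrow> real" and L :: real
  assumes L_pos: "0 < L"
    and continuous: "continuous_on {0..L} \<rho>"
    and nonneg: "\<And>\<zeta>. \<zeta> \<in> {0..L} \<Longrightarrow> 0 \<le> \<rho> \<zeta>"
    and integrable_origin: "(\<lambda>\<zeta>. \<rho> \<zeta> / \<zeta>) integrable_on {0..L}"
begin

abbreviation V00 :: real where
  "V00 \<equiv> potential \<rho> L 0 0"

abbreviation integrand :: "real \<Rightarrow> real \<Rightarrow> real \<Rightarrow> real" where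
  "integrand r z \<equiv> \<lambda>\<zeta>. \<rho> \<zeta> / sqrt ((\<zeta> - z)^2 + r^2)"

definition V00_upto :: "real \<Rightarrow> real" where
  "V00_upto \<eta> = integral {0..\<eta>} (\<lambda>\<zeta>. \<rho> \<zeta> / \<zeta>)"

lemma V00_eq: "V00 = integral {0..L} (\<lambda>\<zeta>. \<rho> \<zeta> / \<zeta>)"
  unfolding potential_def by (rule integral_cong) simp

lemma integrable_origin_on: "0 \<le> a \<Longrightarrow> b \<le> L \<Longrightarrow> (\<lambda>\<zeta>. \<rho> \<zeta> / \<zeta>) integrable_on {a..b}"
  by (rule integrable_on_subinterval[OF integrable_origin]) auto

lemma integrable_integrand: "0 < r \<Longrightarrow> 0 \<le> a \<Longrightarrow> b \<le> L \<Longrightarrow> integrand r z integrable_on {a..b}"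
  by (rule integrable_on_subinterval[OF integrable_continuous_interval])
    (auto intro!: continuous_intros continuous simp: add_nonneg_pos)

lemma integral_integrand_nonneg: "0 \<le> a \<Longrightarrow> b \<le> L \<Longrightarrow> 0 < r \<Longrightarrow> 0 \<le> integral {a..b} (integrand r z)"
  by (rule integral_nonneg[OF integrable_integrand]) (auto intro!: divide_nonneg_nonneg nonneg)

lemma V00_upto_nonneg: "0 \<le> \<eta> \<Longrightarrow> \<eta> \<le> L \<Longrightarrow> 0 \<le> V00_upto \<eta>"
  unfolding V00_upto_def
  by (rule integral_nonneg[OF integrable_origin_on]) (auto intro!: divide_nonneg_nonneg nonneg)

lemma integral_origin_tail: "0 \<le> \<eta> \<Longrightarrow> \<eta> \<le> L \<Longrightarrow> integral {\<eta>..L} (\<lambda>\<zeta>. \<rho> \<zeta> / \<zeta>) = V00 - V00_upto \<eta>"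
  using Henstock_Kurzweil_Integration.integral_combine[OF _ _ integrable_origin, of \<eta>]
  by (simp add: V00_eq V00_upto_def)

lemma tendsto_V00_upto: "(V00_upto \<longlongrightarrow> 0) (at_right 0)"
  unfolding V00_upto_def by (rule tendsto_integral_at_right_0[OF integrable_origin L_pos])

lemma integral_integrand_le:
  assumes "0 \<le> a" "a \<le> b" "b \<le> L" "0 < r" "(e has_integral E) {a..b}"
    and "\<And>\<zeta>. \<zeta> \<in> {a..b} \<Longrightarrow> integrand r z \<zeta> \<le> P / sqrt ((\<zeta> - z)^2 + r^2) + e \<zeta>"
  shows "integral {a..b} (integrand r z) \<le> P * (arsinh ((b - z) / r) - arsinh ((a - z) / r)) + E"
proof (rule has_integral_le[OF integrable_integral])
  show "integrand r z integrable_on {a..b}"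
    using assms by (intro integrable_integrand)
  show "((\<lambda>\<zeta>. P * (1 / sqrt ((\<zeta> - z)^2 + r^2)) + e \<zeta>)
          has_integral P * (arsinh ((b - z) / r) - arsinh ((a - z) / r)) + E) {a..b}"
    using assms by (intro has_integral_add has_integral_mult_right has_integral_inverse_distance)
qed (use assms in simp)

lemma integral_integrand_ge:
  assumes "0 \<le> a" "a \<le> b" "b \<le> L" "0 < r" "(e has_integral E) {a..b}"
    and "\<And>\<zeta>. \<zeta> \<in> {a..b} \<Longrightarrow> P / sqrt ((\<zeta> - z)^2 + r^2) - e \<zeta> \<le> integrand r z \<zeta>"
  shows "P * (arsinh ((b - z) / r) - arsinh ((a - z) / r)) - E \<le> integral {a..b} (integrand r z)"
proof (rule has_integral_le[OF _ integrable_integral])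
  show "integrand r z integrable_on {a..b}"
    using assms by (intro integrable_integrand)
  show "((\<lambda>\<zeta>. P * (1 / sqrt ((\<zeta> - z)^2 + r^2)) - e \<zeta>)
          has_integral P * (arsinh ((b - z) / r) - arsinh ((a - z) / r)) - E) {a..b}"
    using assms by (intro has_integral_diff has_integral_mult_right has_integral_inverse_distance)
qed (use assms in simp)

lemma integral_integrand_le_mult_origin:
  assumes "0 \<le> a" "b \<le> L" "0 < r" "\<And>\<zeta>. \<zeta> \<in> {a..b} \<Longrightarrow> integrand r z \<zeta> \<le> c * (\<rho> \<zeta> / \<zeta>)"
  shows "integral {a..b} (integrand r z) \<le> c * integral {a..b} (\<lambda>\<zeta>. \<rho> \<zeta> / \<zeta>)"
proof -
  have "integral {a..b} (integrand r z) \<le> integral {a..b} (\<lambda>\<zeta>. c * (\<rho> \<zeta> / \<zeta>))"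
    using assms by (intro integral_le integrable_integrand integrable_on_mult_right integrable_origin_on)
  then show ?thesis
    by (simp only: integral_mult_right)
qed

lemma mult_origin_le_integral_integrand:
  assumes "0 \<le> a" "b \<le> L" "0 < r" "\<And>\<zeta>. \<zeta> \<in> {a..b} \<Longrightarrow> c * (\<rho> \<zeta> / \<zeta>) \<le> integrand r z \<zeta>"
  shows "c * integral {a..b} (\<lambda>\<zeta>. \<rho> \<zeta> / \<zeta>) \<le> integral {a..b} (integrand r z)"
proof -
  have "integral {a..b} (\<lambda>\<zeta>. c * (\<rho> \<zeta> / \<zeta>)) \<le> integral {a..b} (integrand r z)"
    using assms by (intro integral_le integrable_integrand integrable_on_mult_right integrable_origin_on)
  then show ?thesis
    by (simp only: integral_mult_right)
qed

lemma integral_integrand_middle_le: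
  assumes "0 < z" "0 < \<kappa>" "(1 + \<kappa>) * z \<le> \<eta>" "\<eta> \<le> L" "0 < r"
  shows "integral {(1 + \<kappa>) * z..\<eta>} (integrand r z) \<le> (1 + \<kappa>) / \<kappa> * V00_upto \<eta>"
proof -
  have "0 < (1 + \<kappa>) * z"
    using assms by simp
  then have "0 < \<zeta>" "\<zeta> \<le> (1 + \<kappa>) / \<kappa> * (\<zeta> - z)" if "(1 + \<kappa>) * z \<le> \<zeta>" for \<zeta>
    using that assms by (simp_all add: field_simps)
  then have "integral {(1 + \<kappa>) * z..\<eta>} (integrand r z)
      \<le> (1 + \<kappa>) / \<kappa> * integral {(1 + \<kappa>) * z..\<eta>} (\<lambda>\<zeta>. \<rho> \<zeta> / \<zeta>)"
    using assms by (intro integral_integrand_le_mult_origin div_sqrt_le_mult_div nonneg)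
      (auto intro: less_imp_le)
  also have "\<dots> \<le> (1 + \<kappa>) / \<kappa> * V00_upto \<eta>"
  proof (rule mult_left_mono)
    show "integral {(1 + \<kappa>) * z..\<eta>} (\<lambda>\<zeta>. \<rho> \<zeta> / \<zeta>) \<le> V00_upto \<eta>"
      unfolding V00_upto_def using assms \<open>0 < (1 + \<kappa>) * z\<close>
      by (intro integral_subset_le integrable_origin_on) (auto intro!: divide_nonneg_nonneg nonneg)
  qed (use assms in simp)
  finally show ?thesis .
qed

lemma integral_integrand_tail_le:
  assumes "0 < z" "2 * z \<le> \<eta>" "\<eta> \<le> L" "0 < r"
  shows "integral {\<eta>..L} (integrand r z) \<le> V00 - V00_upto \<eta> + 2 * z * V00 / \<eta>"
proof -
  have "\<zeta> \<le> (1 + 2 * z / \<eta>) * (\<zeta> - z)" if "\<eta> \<le> \<zeta>" for \<zeta>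
  proof -
    have "(1 + 2 * z / \<eta>) * (\<zeta> - z) - \<zeta> = z * (2 * (\<zeta> - z) - \<eta>) / \<eta>"
      using assms by (simp add: field_simps)
    moreover have "0 \<le> z * (2 * (\<zeta> - z) - \<eta>) / \<eta>"
      using assms that by simp
    ultimately show ?thesis
      by linarith
  qed
  then have "integral {\<eta>..L} (integrand r z) \<le> (1 + 2 * z / \<eta>) * integral {\<eta>..L} (\<lambda>\<zeta>. \<rho> \<zeta> / \<zeta>)"
    using assms by (intro integral_integrand_le_mult_origin div_sqrt_le_mult_div nonneg)
      (auto simp: add_pos_nonneg)
  also have "\<dots> = (1 + 2 * z / \<eta>) * (V00 - V00_upto \<eta>)"
    using assms by (simp add: integral_origin_tail)
  also have "\<dots> \<le> V00 - V00_upto \<eta> + 2 * z * V00 / \<eta>"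
    using assms V00_upto_nonneg[of \<eta>] by (simp add: algebra_simps)
  finally show ?thesis .
qed

lemma integral_integrand_tail_ge:
  assumes "0 \<le> z" "z \<le> \<eta>" "0 < \<eta>" "\<eta> \<le> L" "0 < r"
  shows "V00 - V00_upto \<eta> - r * V00 / \<eta> \<le> integral {\<eta>..L} (integrand r z)"
proof -
  have "V00 - V00_upto \<eta> - r * V00 / \<eta> \<le> (1 - r / \<eta>) * (V00 - V00_upto \<eta>)"
    using assms V00_upto_nonneg[of \<eta>] by (simp add: algebra_simps)
  also have "\<dots> = (1 - r / \<eta>) * integral {\<eta>..L} (\<lambda>\<zeta>. \<rho> \<zeta> / \<zeta>)"
    using assms by (simp add: integral_origin_tail)
  also have "\<dots> \<le> integral {\<eta>..L} (integrand r z)"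
    using assms by (intro mult_origin_le_integral_integrand mult_div_le_div_sqrt nonneg) auto
  finally show ?thesis .
qed

lemma potential_le_near_far:
  assumes "0 < z" "0 < \<kappa>" "(1 + \<kappa>) * z \<le> \<eta>" "2 * z \<le> \<eta>" "\<eta> \<le> L" "0 < r"
  shows "potential \<rho> L r z \<le> integral {0..(1 + \<kappa>) * z} (integrand r z)
           + (1 + \<kappa>) / \<kappa> * V00_upto \<eta> + V00 + 2 * z * V00 / \<eta>"
proof -
  have "0 \<le> (1 + \<kappa>) * z"
    using assms by simp
  then have "potential \<rho> L r z = integral {0..(1 + \<kappa>) * z} (integrand r z)
      + integral {(1 + \<kappa>) * z..\<eta>} (integrand r z) + integral {\<eta>..L} (integrand r z)"
    unfolding potential_def using assms
    by (simp add: Henstock_Kurzweil_Integration.integral_combine integrable_integrand)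
  then show ?thesis
    using integral_integrand_middle_le[OF assms(1,2,3,5,6)] integral_integrand_tail_le[OF assms(1,4,5,6)]
      V00_upto_nonneg[of \<eta>] assms by linarith
qed

lemma potential_ge_near_far:
  assumes "0 \<le> a" "a \<le> b" "b \<le> \<eta>" "\<eta> \<le> L" "0 < \<eta>" "0 \<le> z" "z \<le> \<eta>" "0 < r"
  shows "integral {a..b} (integrand r z) + V00 - V00_upto \<eta> - r * V00 / \<eta> \<le> potential \<rho> L r z"
proof -
  have "potential \<rho> L r z = integral {0..a} (integrand r z) + integral {a..b} (integrand r z)
      + integral {b..\<eta>} (integrand r z) + integral {\<eta>..L} (integrand r z)"
    unfolding potential_def using assms
    by (simp add: Henstock_Kurzweil_Integration.integral_combine integrable_integrand)
  moreover have "0 \<le> integral {0..a} (integrand r z)" "0 \<le> integral {b..\<eta>} (integrand r z)"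
    using assms by (auto intro!: integral_integrand_nonneg)
  ultimately show ?thesis
    using integral_integrand_tail_ge[OF assms(6,7,5,4,8)] by linarith
qed

lemma obtain_V00_upto_less:
  assumes "0 < c"
  obtains \<eta> where "0 < \<eta>" "\<eta> \<le> L" "V00_upto \<eta> < c"
proof -
  have "\<forall>\<^sub>F \<eta> in at_right 0. \<eta> \<in> {0<..<L} \<and> V00_upto \<eta> < c"
    using eventually_at_right_real[OF L_pos] order_tendstoD(2)[OF tendsto_V00_upto assms]
    by eventually_elim auto
  then show ?thesis
    using that eventually_happens'[OF trivial_limit_at_right_real] by force
qed

lemma eventually_potential_le:
  assumes "0 < \<kappa>" "0 < \<epsilon>"
    and near: "\<forall>\<^sub>F (z, r) in at_right 0 \<times>\<^sub>F at_right 0.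
                 integral {0..(1 + \<kappa>) * z} (integrand r z) \<le> 2 * P z * - ln r + E z"
    and E: "(E \<longlongrightarrow> 0) (at_right 0)"
  shows "\<forall>\<^sub>F (z, r) in at_right 0 \<times>\<^sub>F at_right 0. potential \<rho> L r z \<le> 2 * P z * - ln r + V00 + \<epsilon>"
proof -
  have "0 < \<kappa> / (1 + \<kappa>) * (\<epsilon> / 3)"
    using assms by simp
  then obtain \<eta> where \<eta>: "0 < \<eta>" "\<eta> \<le> L" "V00_upto \<eta> < \<kappa> / (1 + \<kappa>) * (\<epsilon> / 3)"
    by (rule obtain_V00_upto_less)
  then have K: "(1 + \<kappa>) / \<kappa> * V00_upto \<eta> < \<epsilon> / 3"
    using assms by (simp add: field_simps)
  have e3: "0 < \<epsilon> / 3"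
    using assms by simp
  have lim: "((\<lambda>z. (1 + \<kappa>) * z) \<longlongrightarrow> 0) (at_right 0)" "((\<lambda>z. 2 * z) \<longlongrightarrow> 0) (at_right (0::real))"
    "((\<lambda>z. 2 * z * V00 / \<eta>) \<longlongrightarrow> 0) (at_right 0)"
    using \<eta> by (auto intro!: tendsto_eq_intros)
  have ev_z: "\<forall>\<^sub>F z in at_right 0. 0 < z \<and> (1 + \<kappa>) * z \<le> \<eta> \<and> 2 * z \<le> \<eta> \<and> E z < \<epsilon> / 3
          \<and> 2 * z * V00 / \<eta> < \<epsilon> / 3"
    using eventually_at_right_less[of 0] order_tendstoD(2)[OF lim(1) \<eta>(1)] order_tendstoD(2)[OF lim(2) \<eta>(1)]
      order_tendstoD(2)[OF E e3] order_tendstoD(2)[OF lim(3) e3]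
    by eventually_elim auto
  have point: "potential \<rho> L r z \<le> 2 * P z * - ln r + V00 + \<epsilon>"
    if "0 < z" "(1 + \<kappa>) * z \<le> \<eta>" "2 * z \<le> \<eta>" "E z < \<epsilon> / 3" "2 * z * V00 / \<eta> < \<epsilon> / 3" "0 < r"
      "integral {0..(1 + \<kappa>) * z} (integrand r z) \<le> 2 * P z * - ln r + E z" for z r
    using potential_le_near_far[OF that(1) \<open>0 < \<kappa>\<close> that(2,3) \<eta>(2) that(6)] that K by linarith
  show ?thesis
    using eventually_prodI[OF ev_z eventually_at_right_less] near by eventually_elim (use point in auto)
qed

lemma eventually_potential_ge:
  assumes "0 < \<epsilon>"
    and near: "\<forall>\<^sub>F (z, r) in at_right 0 \<times>\<^sub>F at_right 0.
                 2 * Q z * - ln r \<le> integral {a z..b z} (integrand r z) + E z"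
    and ab: "\<forall>\<^sub>F z in at_right 0. 0 \<le> a z \<and> a z \<le> b z" and b: "(b \<longlongrightarrow> 0) (at_right 0)"
    and E: "(E \<longlongrightarrow> 0) (at_right 0)"
  shows "\<forall>\<^sub>F (z, r) in at_right 0 \<times>\<^sub>F at_right 0. 2 * Q z * - ln r + V00 - \<epsilon> \<le> potential \<rho> L r z"
proof -
  have e3: "0 < \<epsilon> / 3"
    using assms by simp
  then obtain \<eta> where \<eta>: "0 < \<eta>" "\<eta> \<le> L" "V00_upto \<eta> < \<epsilon> / 3"
    by (rule obtain_V00_upto_less)
  have ev_z: "\<forall>\<^sub>F z in at_right 0. 0 < z \<and> z \<le> \<eta> \<and> 0 \<le> a z \<and> a z \<le> b z \<and> b z \<le> \<eta> \<and> E z < \<epsilon> / 3"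
    using eventually_at_right_real[OF \<eta>(1)] ab order_tendstoD(2)[OF b \<eta>(1)] order_tendstoD(2)[OF E e3]
    by eventually_elim auto
  have "((\<lambda>r. r * V00 / \<eta>) \<longlongrightarrow> 0) (at_right 0)"
    using \<eta> by (auto intro!: tendsto_eq_intros)
  from order_tendstoD(2)[OF this e3]
  have ev_r: "\<forall>\<^sub>F r in at_right 0. 0 < r \<and> r * V00 / \<eta> < \<epsilon> / 3"
    using eventually_at_right_less[of 0] by eventually_elim auto
  have point: "2 * Q z * - ln r + V00 - \<epsilon> \<le> potential \<rho> L r z"
    if "0 < z \<and> z \<le> \<eta> \<and> 0 \<le> a z \<and> a z \<le> b z \<and> b z \<le> \<eta> \<and> E z < \<epsilon> / 3"
      "0 < r \<and> r * V00 / \<eta> < \<epsilon> / 3"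
      "2 * Q z * - ln r \<le> integral {a z..b z} (integrand r z) + E z" for z r
    using potential_ge_near_far[of "a z" "b z" \<eta> z r] that \<eta> by auto
  show ?thesis
    using eventually_prodI[OF ev_z ev_r] near by eventually_elim (use point in auto)
qed

lemma integral_integrand_le_mono:
  assumes "b \<le> L" and mono: "mono_on {0..b} \<rho>"
    and "0 < z" "0 < \<delta>" "(1 + \<delta>) * z \<le> b" "0 < r" "2 * ((1 + \<delta>) * z) + r \<le> 1"
  shows "integral {0..(1 + \<delta>) * z} (integrand r z) \<le> 2 * \<rho> ((1 + \<delta>) * z) * - ln r"
proof -
  have "0 < \<delta> * z" "(1 + \<delta>) * z = z + \<delta> * z"
    using assms by (simp_all add: algebra_simps)
  then have "2 * (\<delta> * z) + r \<le> 1" "2 * z + r \<le> 1"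
    using assms by linarith+
  have "integral {0..(1 + \<delta>) * z} (integrand r z)
      \<le> \<rho> ((1 + \<delta>) * z) * (arsinh (((1 + \<delta>) * z - z) / r) - arsinh ((0 - z) / r)) + 0"
    using assms by (intro integral_integrand_le[where e = "\<lambda>_. 0"])
      (auto intro!: divide_right_mono mono_onD[OF mono])
  also have "\<dots> = \<rho> ((1 + \<delta>) * z) * (arsinh (\<delta> * z / r) + arsinh (z / r))"
    by (simp add: algebra_simps)
  also have "\<dots> \<le> \<rho> ((1 + \<delta>) * z) * (- ln r + - ln r)"
    using assms \<open>0 < \<delta> * z\<close> \<open>2 * (\<delta> * z) + r \<le> 1\<close> \<open>2 * z + r \<le> 1\<close>
    by (intro mult_left_mono add_mono arsinh_div_le_minus_ln nonneg) auto
  finally show ?thesis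
    by simp
qed

lemma integral_integrand_ge_mono:
  assumes "b \<le> L" and mono: "mono_on {0..b} \<rho>"
    and "0 < z" "0 < \<delta>" "\<delta> < 1" "(1 + \<delta>) * z \<le> b" "0 < r"
  shows "2 * \<rho> ((1 - \<delta>) * z) * (ln (\<delta> * z) - ln r) \<le> integral {(1 - \<delta>) * z..(1 + \<delta>) * z} (integrand r z)"
proof -
  have le: "0 \<le> (1 - \<delta>) * z" "(1 - \<delta>) * z \<le> (1 + \<delta>) * z"
    using assms by (auto intro: mult_right_mono)
  moreover have "(1 - \<delta>) * z \<le> L"
    using le assms by linarith
  ultimately have "0 \<le> \<rho> ((1 - \<delta>) * z)"
    by (intro nonneg) simp
  then have "2 * \<rho> ((1 - \<delta>) * z) * (ln (\<delta> * z) - ln r) \<le> \<rho> ((1 - \<delta>) * z) * (2 * arsinh (\<delta> * z / r))"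
    using assms ln_diff_le_arsinh_div[of "\<delta> * z" r] by (simp add: mult_left_mono)
  also have "\<dots> = \<rho> ((1 - \<delta>) * z) * (arsinh (((1 + \<delta>) * z - z) / r) - arsinh (((1 - \<delta>) * z - z) / r)) - 0"
    by (simp add: algebra_simps)
  also have "\<dots> \<le> integral {(1 - \<delta>) * z..(1 + \<delta>) * z} (integrand r z)"
  proof (intro integral_integrand_ge[where e = "\<lambda>_. 0"])
    fix \<zeta> assume "\<zeta> \<in> {(1 - \<delta>) * z..(1 + \<delta>) * z}"
    then have "(1 - \<delta>) * z \<le> \<zeta>" "\<zeta> \<le> b"
      using assms by simp_all
    then have "\<rho> ((1 - \<delta>) * z) \<le> \<rho> \<zeta>"
      using le by (intro mono_onD[OF mono]) auto
    then show "\<rho> ((1 - \<delta>) * z) / sqrt ((\<zeta> - z)^2 + r^2) - 0 \<le> integrand r z \<zeta>"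
      by (simp add: divide_right_mono)
  qed (use assms le in auto)
  finally show ?thesis .
qed

lemma tendsto_density_mult_ln_mono:
  assumes "0 < b" "b \<le> L" "mono_on {0..b} \<rho>" "\<rho> 0 = 0" "0 < \<delta>" "\<delta> < 1"
  shows "((\<lambda>z. \<rho> ((1 - \<delta>) * z) * ln (\<delta> * z)) \<longlongrightarrow> 0) (at_right 0)"
proof -
  have "((\<lambda>t. \<rho> t * ln t) \<longlongrightarrow> 0) (at_right 0)"
    using assms by (intro tendsto_mono_mult_ln_at_right_0 nonneg integrable_origin_on) auto
  moreover have "(\<rho> \<longlongrightarrow> 0) (at_right 0)"
    using continuous_on_Icc_at_rightD[OF continuous L_pos] \<open>\<rho> 0 = 0\<close> by simp
  ultimately have "((\<lambda>t. \<rho> t * ln t + \<rho> t * ln (\<delta> / (1 - \<delta>))) \<longlongrightarrow> 0) (at_right 0)"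
    using tendsto_add[OF _ tendsto_mult_left_zero] by simp
  then have "((\<lambda>z. \<rho> ((1 - \<delta>) * z) * ln ((1 - \<delta>) * z) + \<rho> ((1 - \<delta>) * z) * ln (\<delta> / (1 - \<delta>)))
      \<longlongrightarrow> 0) (at_right 0)"
    by (rule filterlim_compose[OF _ filterlim_mult_const_at_right_0]) (use \<open>\<delta> < 1\<close> in simp)
  moreover have "\<forall>\<^sub>F z in at_right 0. \<rho> ((1 - \<delta>) * z) * ln ((1 - \<delta>) * z) + \<rho> ((1 - \<delta>) * z) * ln (\<delta> / (1 - \<delta>))
      = \<rho> ((1 - \<delta>) * z) * ln (\<delta> * z)"
    using eventually_at_right_less[of 0]
  proof eventually_elim
    case (elim z)
    then have "ln ((1 - \<delta>) * z) + ln (\<delta> / (1 - \<delta>)) = ln (\<delta> * z)"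
      using assms by (simp add: ln_mult_pos[symmetric])
    then show ?case
      by (simp add: distrib_left[symmetric])
  qed
  ultimately show ?thesis
    by (rule Lim_transform_eventually)
qed

lemma potential_upper_mono:
  assumes "0 < b" "b \<le> L" "mono_on {0..b} \<rho>" "0 < \<delta>" "0 < \<epsilon>"
  shows "\<forall>\<^sub>F (z, r) in at_right 0 \<times>\<^sub>F at_right 0.
           potential \<rho> L r z \<le> 2 * \<rho> ((1 + \<delta>) * z) * - ln r + V00 + \<epsilon>"
proof (rule eventually_potential_le[OF \<open>0 < \<delta>\<close> \<open>0 < \<epsilon>\<close> _ tendsto_const])
  have "0 < min b 1 / (4 * (1 + \<delta>))" "(0::real) < 1 / 2"
    using assms by simp_all
  from eventually_at_right_0_pair_less[OF this]
  show "\<forall>\<^sub>F (z, r) in at_right 0 \<times>\<^sub>F at_right 0.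
          integral {0..(1 + \<delta>) * z} (integrand r z) \<le> 2 * \<rho> ((1 + \<delta>) * z) * - ln r + 0"
  proof (eventually_elim, clarify)
    fix z r :: real assume "z \<in> {0<..<min b 1 / (4 * (1 + \<delta>))}" "r \<in> {0<..<1 / 2}"
    then have "integral {0..(1 + \<delta>) * z} (integrand r z) \<le> 2 * \<rho> ((1 + \<delta>) * z) * - ln r"
      using assms by (intro integral_integrand_le_mono[where b = b]) (auto simp: field_simps)
    then show "integral {0..(1 + \<delta>) * z} (integrand r z) \<le> 2 * \<rho> ((1 + \<delta>) * z) * - ln r + 0"
      by simp
  qed
qed

lemma potential_lower_mono:
  assumes "0 < b" "b \<le> L" "mono_on {0..b} \<rho>" "\<rho> 0 = 0" "0 < \<delta>" "\<delta> < 1" "0 < \<epsilon>"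
  shows "\<forall>\<^sub>F (z, r) in at_right 0 \<times>\<^sub>F at_right 0.
           2 * \<rho> ((1 - \<delta>) * z) * - ln r + V00 - \<epsilon> \<le> potential \<rho> L r z"
proof (rule eventually_potential_ge[OF \<open>0 < \<epsilon>\<close>, where a = "\<lambda>z. (1 - \<delta>) * z"
      and b = "\<lambda>z. (1 + \<delta>) * z" and E = "\<lambda>z. - 2 * (\<rho> ((1 - \<delta>) * z) * ln (\<delta> * z))"])
  show "((\<lambda>z. (1 + \<delta>) * z) \<longlongrightarrow> 0) (at_right 0)"
    by (auto intro!: tendsto_eq_intros)
  show "((\<lambda>z. - 2 * (\<rho> ((1 - \<delta>) * z) * ln (\<delta> * z))) \<longlongrightarrow> 0) (at_right 0)"
    using assms by (intro tendsto_mult_right_zero tendsto_density_mult_ln_mono)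
  show "\<forall>\<^sub>F z in at_right 0. 0 \<le> (1 - \<delta>) * z \<and> (1 - \<delta>) * z \<le> (1 + \<delta>) * z"
    using eventually_at_right_less[of 0] by eventually_elim (use assms in auto)
  have "0 < b / (1 + \<delta>)" "(0::real) < 1"
    using assms by simp_all
  from eventually_at_right_0_pair_less[OF this]
  show "\<forall>\<^sub>F (z, r) in at_right 0 \<times>\<^sub>F at_right 0. 2 * \<rho> ((1 - \<delta>) * z) * - ln r
          \<le> integral {(1 - \<delta>) * z..(1 + \<delta>) * z} (integrand r z) + - 2 * (\<rho> ((1 - \<delta>) * z) * ln (\<delta> * z))"
  proof (eventually_elim, clarify)
    fix z r :: real assume "z \<in> {0<..<b / (1 + \<delta>)}" "r \<in> {0<..<1}"
    then have "2 * \<rho> ((1 - \<delta>) * z) * (ln (\<delta> * z) - ln r)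
        \<le> integral {(1 - \<delta>) * z..(1 + \<delta>) * z} (integrand r z)"
      using assms by (intro integral_integrand_ge_mono[where b = b]) (auto simp: field_simps)
    then show "2 * \<rho> ((1 - \<delta>) * z) * - ln r
        \<le> integral {(1 - \<delta>) * z..(1 + \<delta>) * z} (integrand r z) + - 2 * (\<rho> ((1 - \<delta>) * z) * ln (\<delta> * z))"
      by (simp add: algebra_simps)
  qed
qed

lemma integral_integrand_dini:
  assumes "0 < b" "b \<le> L" "dini_continuous_on 0 b \<rho>" "0 < z" "2 * z \<le> b" "z \<le> 1" "0 < r"
  shows "\<bar>integral {0..2 * z} (integrand r z) - 2 * \<rho> z * arsinh (z / r)\<bar>
           \<le> 2 * integral {0..z} (\<lambda>t. modulus_of_continuity 0 b \<rho> t / t)"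
proof -
  let ?\<omega> = "modulus_of_continuity 0 b \<rho>"
  let ?J = "integral {0..z} (\<lambda>t. ?\<omega> t / t)"
  have cont: "continuous_on {0..b} \<rho>" and "(\<lambda>t. ?\<omega> t / t) integrable_on {0..1}"
    using assms(3) unfolding dini_continuous_on_def by auto
  then have "((\<lambda>t. ?\<omega> t / t) has_integral ?J) {0..z}"
    using assms by (intro integrable_integral integrable_on_subinterval) auto
  then have "((\<lambda>\<zeta>. ?\<omega> \<bar>\<zeta> - z\<bar> / \<bar>\<zeta> - z\<bar>) has_integral 2 * ?J) {z - z..z + z}"
    using assms by (intro has_integral_comp_abs_diff) auto
  then have e: "((\<lambda>\<zeta>. ?\<omega> \<bar>\<zeta> - z\<bar> / \<bar>\<zeta> - z\<bar>) has_integral 2 * ?J) {0..2 * z}"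
    by simp
  have pointwise: "\<bar>integrand r z \<zeta> - \<rho> z / sqrt ((\<zeta> - z)^2 + r^2)\<bar> \<le> ?\<omega> \<bar>\<zeta> - z\<bar> / \<bar>\<zeta> - z\<bar>"
    if "\<zeta> \<in> {0..2 * z}" for \<zeta>
  proof (cases "\<zeta> = z")
    case False
    then show ?thesis
      using that assms
      by (intro abs_divide_diff_le real_sqrt_ge_abs1 abs_diff_le_modulus_of_continuity[OF cont]) auto
  qed simp
  have point_le: "integrand r z \<zeta> \<le> \<rho> z / sqrt ((\<zeta> - z)^2 + r^2) + ?\<omega> \<bar>\<zeta> - z\<bar> / \<bar>\<zeta> - z\<bar>"
    and point_ge: "\<rho> z / sqrt ((\<zeta> - z)^2 + r^2) - ?\<omega> \<bar>\<zeta> - z\<bar> / \<bar>\<zeta> - z\<bar> \<le> integrand r z \<zeta>"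
    if "\<zeta> \<in> {0..2 * z}" for \<zeta>
    using pointwise[OF that] unfolding abs_le_iff by linarith+
  have "integral {0..2 * z} (integrand r z)
      \<le> \<rho> z * (arsinh ((2 * z - z) / r) - arsinh ((0 - z) / r)) + 2 * ?J"
    using assms by (intro integral_integrand_le[OF _ _ _ _ e point_le]) auto
  moreover have "\<rho> z * (arsinh ((2 * z - z) / r) - arsinh ((0 - z) / r)) - 2 * ?J
      \<le> integral {0..2 * z} (integrand r z)"
    using assms by (intro integral_integrand_ge[OF _ _ _ _ e point_ge]) auto
  ultimately show ?thesis
    by (simp add: abs_le_iff)
qed

lemma potential_upper_dini:
  assumes "0 < b" "b \<le> L" "dini_continuous_on 0 b \<rho>" "0 < \<epsilon>"
  shows "\<forall>\<^sub>F (z, r) in at_right 0 \<times>\<^sub>F at_right 0. potential \<rho> L r z \<le> 2 * \<rho> z * - ln r + V00 + \<epsilon>"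
proof (rule eventually_potential_le[OF zero_less_one \<open>0 < \<epsilon>\<close>,
      where E = "\<lambda>z. 2 * integral {0..z} (\<lambda>t. modulus_of_continuity 0 b \<rho> t / t)"])
  have "(\<lambda>t. modulus_of_continuity 0 b \<rho> t / t) integrable_on {0..1}"
    using assms(3) unfolding dini_continuous_on_def by simp
  then show "((\<lambda>z. 2 * integral {0..z} (\<lambda>t. modulus_of_continuity 0 b \<rho> t / t)) \<longlongrightarrow> 0) (at_right 0)"
    by (intro tendsto_mult_right_zero tendsto_integral_at_right_0) auto
  have near: "integral {0..2 * z} (integrand r z)
      \<le> 2 * \<rho> z * - ln r + 2 * integral {0..z} (\<lambda>t. modulus_of_continuity 0 b \<rho> t / t)"
    if "z \<in> {0<..<min b 1 / 4}" "r \<in> {0<..<1 / 2}" for z r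
  proof -
    have "\<rho> z * arsinh (z / r) \<le> \<rho> z * - ln r"
      using that assms by (intro mult_left_mono arsinh_div_le_minus_ln nonneg) auto
    then show ?thesis
      using integral_integrand_dini[of b z r] that assms by (simp add: abs_le_iff)
  qed
  have "0 < min b 1 / 4" "(0::real) < 1 / 2"
    using assms by simp_all
  from eventually_at_right_0_pair_less[OF this] near
  show "\<forall>\<^sub>F (z, r) in at_right 0 \<times>\<^sub>F at_right 0. integral {0..(1 + 1) * z} (integrand r z)
          \<le> 2 * \<rho> z * - ln r + 2 * integral {0..z} (\<lambda>t. modulus_of_continuity 0 b \<rho> t / t)"
    by (auto elim!: eventually_mono)
qed

lemma potential_lower_dini:
  assumes "0 < b" "b \<le> L" "dini_continuous_on 0 b \<rho>" "\<rho> 0 = 0" "0 < \<epsilon>"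
  shows "\<forall>\<^sub>F (z, r) in at_right 0 \<times>\<^sub>F at_right 0. 2 * \<rho> z * - ln r + V00 - \<epsilon> \<le> potential \<rho> L r z"
proof (rule eventually_potential_ge[OF \<open>0 < \<epsilon>\<close>, where a = "\<lambda>_. 0" and b = "\<lambda>z. 2 * z"
      and E = "\<lambda>z. 2 * integral {0..z} (\<lambda>t. modulus_of_continuity 0 b \<rho> t / t) - 2 * (\<rho> z * ln z)"])
  have "(\<lambda>t. modulus_of_continuity 0 b \<rho> t / t) integrable_on {0..1}"
    using assms(3) unfolding dini_continuous_on_def by simp
  then show "((\<lambda>z. 2 * integral {0..z} (\<lambda>t. modulus_of_continuity 0 b \<rho> t / t) - 2 * (\<rho> z * ln z))
      \<longlongrightarrow> 0) (at_right 0)"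
    using tendsto_diff[OF tendsto_mult_right_zero[OF tendsto_integral_at_right_0]
        tendsto_mult_right_zero[OF tendsto_mult_ln_dini]] assms by simp
  show "((\<lambda>z. 2 * z :: real) \<longlongrightarrow> 0) (at_right 0)"
    by (auto intro!: tendsto_eq_intros)
  show "\<forall>\<^sub>F z in at_right 0. 0 \<le> (0::real) \<and> 0 \<le> 2 * (z::real)"
    using eventually_at_right_less[of 0] by eventually_elim auto
  have near: "2 * \<rho> z * - ln r \<le> integral {0..2 * z} (integrand r z)
      + (2 * integral {0..z} (\<lambda>t. modulus_of_continuity 0 b \<rho> t / t) - 2 * (\<rho> z * ln z))"
    if "z \<in> {0<..<min b 1 / 4}" "r \<in> {0<..<1 / 2}" for z r
  proof -
    have "\<rho> z * (ln z - ln r) \<le> \<rho> z * arsinh (z / r)"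
      using that assms by (intro mult_left_mono ln_diff_le_arsinh_div nonneg) auto
    then show ?thesis
      using integral_integrand_dini[of b z r] that assms by (simp add: abs_le_iff algebra_simps)
  qed
  have "0 < min b 1 / 4" "(0::real) < 1 / 2"
    using assms by simp_all
  from eventually_at_right_0_pair_less[OF this] near
  show "\<forall>\<^sub>F (z, r) in at_right 0 \<times>\<^sub>F at_right 0. 2 * \<rho> z * - ln r \<le> integral {0..2 * z} (integrand r z)
      + (2 * integral {0..z} (\<lambda>t. modulus_of_continuity 0 b \<rho> t / t) - 2 * (\<rho> z * ln z))"
    by (auto elim!: eventually_mono)
qed

end

section \<open>The contour near the origin\<close>

lemma less_exp_neg_divide_iff:
  fixes x p a :: real
  assumes "0 < x" "0 < p"
  shows "x < exp (- a / p) \<longleftrightarrow> a < p * - ln x"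
proof -
  have "x < exp (- a / p) \<longleftrightarrow> ln x < - a / p"
    using assms by (metis exp_less_cancel_iff exp_ln)
  also have "\<dots> \<longleftrightarrow> a < p * - ln x"
    using assms by (auto simp: field_simps)
  finally show ?thesis .
qed

lemma exp_neg_divide_less_iff:
  fixes x q a :: real
  assumes "0 < x" "0 < q"
  shows "exp (- a / q) < x \<longleftrightarrow> q * - ln x < a"
proof -
  have "exp (- a / q) < x \<longleftrightarrow> - a / q < ln x"
    using assms by (metis exp_less_cancel_iff exp_ln)
  also have "\<dots> \<longleftrightarrow> q * - ln x < a"
    using assms by (auto simp: field_simps)
  finally show ?thesis .
qed

lemma eventually_level_of_contour:
  fixes V :: "real \<Rightarrow> real \<Rightarrow> real" and rc :: "real \<Rightarrow> real"
  assumes "{(r, z). 0 \<le> r \<and> (0 < r \<or> z \<notin> {0..L}) \<and> V r z = c} \<union> {(0, 0)} = (\<lambda>z. (rc z, z)) ` {0..z2}"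
    and "0 < z2"
  shows "\<forall>\<^sub>F z in at_right 0. V (rc z) z = c"
  using eventually_at_right_real[OF assms(2)]
proof eventually_elim
  case (elim z)
  then have "(rc z, z) \<in> {(r, z). 0 \<le> r \<and> (0 < r \<or> z \<notin> {0..L}) \<and> V r z = c} \<union> {(0, 0)}"
    unfolding assms(1) by auto
  with elim show ?case
    by auto
qed

lemma eventually_contour_bounds:
  fixes V :: "real \<Rightarrow> real \<Rightarrow> real" and rc P Q :: "real \<Rightarrow> real"
  assumes rc: "filterlim rc (at_right 0) (at_right 0)"
    and level: "\<forall>\<^sub>F z in at_right 0. V (rc z) z = c"
    and upper: "\<And>\<epsilon>. 0 < \<epsilon> \<Longrightarrow>
                  \<forall>\<^sub>F (z, r) in at_right 0 \<times>\<^sub>F at_right 0. V r z \<le> 2 * P z * - ln r + v + \<epsilon>"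
    and lower: "\<And>\<epsilon>. 0 < \<epsilon> \<Longrightarrow>
                  \<forall>\<^sub>F (z, r) in at_right 0 \<times>\<^sub>F at_right 0. 2 * Q z * - ln r + v - \<epsilon> \<le> V r z"
    and pos: "\<forall>\<^sub>F z in at_right 0. 0 < P z \<and> 0 < Q z"
    and \<alpha>: "\<alpha> < (c - v) / 2" and \<beta>: "(c - v) / 2 < \<beta>"
  shows "\<forall>\<^sub>F z in at_right 0. exp (- \<beta> / Q z) < rc z \<and> rc z < exp (- \<alpha> / P z)"
proof -
  have pair: "filterlim (\<lambda>z. (z, rc z)) (at_right 0 \<times>\<^sub>F at_right 0) (at_right 0)"
    by (rule filterlim_Pair[OF filterlim_ident rc])
  define \<epsilon>\<^sub>1 \<epsilon>\<^sub>2 where "\<epsilon>\<^sub>1 = (c - v) / 2 - \<alpha>" and "\<epsilon>\<^sub>2 = \<beta> - (c - v) / 2"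
  have "0 < \<epsilon>\<^sub>1" "0 < \<epsilon>\<^sub>2"
    using \<alpha> \<beta> by (simp_all add: \<epsilon>\<^sub>1_def \<epsilon>\<^sub>2_def)
  have "\<forall>\<^sub>F z in at_right 0. V (rc z) z \<le> 2 * P z * - ln (rc z) + v + \<epsilon>\<^sub>1"
    using eventually_compose_filterlim[OF upper[OF \<open>0 < \<epsilon>\<^sub>1\<close>] pair] by simp
  moreover have "\<forall>\<^sub>F z in at_right 0. 2 * Q z * - ln (rc z) + v - \<epsilon>\<^sub>2 \<le> V (rc z) z"
    using eventually_compose_filterlim[OF lower[OF \<open>0 < \<epsilon>\<^sub>2\<close>] pair] by simp
  moreover have "\<forall>\<^sub>F z in at_right 0. 0 < rc z"
    by (rule eventually_compose_filterlim[OF eventually_at_right_less rc])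
  ultimately show ?thesis
    using level pos
  proof eventually_elim
    case (elim z)
    then have "c \<le> 2 * (P z * - ln (rc z)) + v + \<epsilon>\<^sub>1" "2 * (Q z * - ln (rc z)) + v - \<epsilon>\<^sub>2 \<le> c"
      by (simp_all only: mult.assoc)
    then have "\<alpha> < P z * - ln (rc z)" "Q z * - ln (rc z) < \<beta>"
      using \<alpha> \<beta> \<epsilon>\<^sub>1_def \<epsilon>\<^sub>2_def by argo+
    then show ?case
      using elim less_exp_neg_divide_iff exp_neg_divide_less_iff by blast
  qed
qed

theorem corollary4p6:
  fixes \<rho> rc :: "real \<Rightarrow> real" and L c z2 \<alpha> \<beta> :: real
  assumes L_pos: "L > 0"
    and \<rho>_cont: "continuous_on {0..L} \<rho>"
    and \<rho>_nonneg: "\<forall>x\<in>{0..L}. \<rho> x \<ge> 0"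
    and \<rho>_0: "\<rho> 0 = 0"
    and \<rho>_pos: "\<forall>x\<in>{0<..L}. \<rho> x > 0"
    and V00_fin: "(\<lambda>\<zeta>. \<rho> \<zeta> / \<zeta>) integrable_on {0..L}"
    and c_gt: "c > potential \<rho> L 0 0"
    and z2_gt: "z2 > L"
    and rc_cont: "continuous_on {0..z2} rc"
    and rc_nonneg: "\<forall>z\<in>{0..z2}. rc z \<ge> 0"
    and rc_ends: "rc 0 = 0" "rc z2 = 0"
    and rc_pos: "\<forall>z\<in>{0<..<z2}. rc z > 0"
    and rc_level: "{(r, z). r \<ge> 0 \<and> (r > 0 \<or> z \<notin> {0..L}) \<and> potential \<rho> L r z = c} \<union> {(0, 0)}
                   = (\<lambda>z. (rc z, z)) ` {0..z2}"
    and \<alpha>_pos: "0 < \<alpha>"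
    and \<alpha>_lt: "\<alpha> < (c - potential \<rho> L 0 0) / 2"
    and \<beta>_gt: "(c - potential \<rho> L 0 0) / 2 < \<beta>"
  shows "(\<forall>b. 0 < b \<and> b \<le> L \<and> mono_on {0..b} \<rho> \<longrightarrow>
            (\<forall>\<delta>. 0 < \<delta> \<and> \<delta> < 1 \<longrightarrow>
               (\<exists>z0\<in>{0<..L}. \<forall>z\<in>{0<..z0}.
                  exp (- \<beta> / \<rho> ((1 - \<delta>) * z)) < rc z \<and>
                  rc z < exp (- \<alpha> / \<rho> ((1 + \<delta>) * z)))))
       \<and> (\<forall>b. 0 < b \<and> b \<le> L \<and> dini_continuous_on 0 b \<rho> \<longrightarrow>
            (\<exists>z0\<in>{0<..L}. \<forall>z\<in>{0<..z0}.
               exp (- \<beta> / \<rho> z) < rc z \<and> rc z < exp (- \<alpha> / \<rho> z)))"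
proof -
  interpret line_density \<rho> L
    using L_pos \<rho>_cont \<rho>_nonneg V00_fin by unfold_locales auto
  have rc: "filterlim rc (at_right 0) (at_right 0)"
    using rc_cont rc_ends z2_gt L_pos rc_pos by (intro filterlim_at_right_0_of_continuous) auto
  have level: "\<forall>\<^sub>F z in at_right 0. potential \<rho> L (rc z) z = c"
    using z2_gt L_pos by (intro eventually_level_of_contour[OF rc_level]) linarith
  note contour_bounds = eventually_at_right_0_imp_Ioc[OF
      eventually_contour_bounds[where V = "potential \<rho> L" and v = V00, OF rc level] L_pos]
  show ?thesis
  proof (intro conjI allI impI)
    fix b \<delta> :: real
    assume "0 < b \<and> b \<le> L \<and> mono_on {0..b} \<rho>" "0 < \<delta> \<and> \<delta> < 1"
    moreover have "\<forall>\<^sub>F z in at_right 0. 0 < \<rho> ((1 + \<delta>) * z) \<and> 0 < \<rho> ((1 - \<delta>) * z)"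
      using \<open>0 < \<delta> \<and> \<delta> < 1\<close>
      by (intro eventually_conj eventually_pos_comp_mult[OF \<rho>_pos L_pos]) auto
    ultimately show "\<exists>z0\<in>{0<..L}. \<forall>z\<in>{0<..z0}.
        exp (- \<beta> / \<rho> ((1 - \<delta>) * z)) < rc z \<and> rc z < exp (- \<alpha> / \<rho> ((1 + \<delta>) * z))"
      using \<rho>_0 \<alpha>_lt \<beta>_gt
      by (intro contour_bounds potential_upper_mono[where b = b] potential_lower_mono[where b = b]) auto
  next
    fix b :: real
    assume "0 < b \<and> b \<le> L \<and> dini_continuous_on 0 b \<rho>"
    moreover have "\<forall>\<^sub>F z in at_right 0. 0 < \<rho> z \<and> 0 < \<rho> z"
      using eventually_pos_comp_mult[OF \<rho>_pos L_pos zero_less_one] by simp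
    ultimately show "\<exists>z0\<in>{0<..L}. \<forall>z\<in>{0<..z0}. exp (- \<beta> / \<rho> z) < rc z \<and> rc z < exp (- \<alpha> / \<rho> z)"
      using \<rho>_0 \<alpha>_lt \<beta>_gt
      by (intro contour_bounds potential_upper_dini[where b = b] potential_lower_dini[where b = b]) auto
  qed
qed

end
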